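(* Let $\mathcal H$ be finite-dimensional, $I\subseteq\mathbb R$ an open interval, and for $j=1,\dots,n$ let $\{\rho_{j,\theta}\}_{\theta\in I}$ be differentiable families of positive definite density matrices on $\mathcal H$. Let $\varrho_\theta=\rho_{1,\theta}\otimes\cdots\otimes\rho_{n,\theta}$ on $\mathfrak H=\mathcal H^{\otimes n}$ and let $\Theta$ be a self-adjoint operator on $\mathfrak H$, independent of $\theta$, which is an unbiased estimator: $\operatorname{Tr}(\varrho_\theta\Theta)=\theta$ for all $\theta\in I$. Then $$\operatorname{Var}_\theta(\Theta):=\operatorname{Tr}\bigl(\varrho_\theta(\Theta-\theta)^2\bigr)\ \ge\ \frac{1}{\sum_{j=1}^n\widetilde{\mathbf I}_j(\theta)},$$ where $\widetilde{\mathbf I}_j(\theta)=\operatorname{Tr}(\rho_{j,\theta}\widetilde H_j(\theta)^2)$ and $\widetilde H_j(\theta)=\frac12(\rho_{j,\theta}^{-1}\rho_{j,\theta}'+\rho_{j,\theta}'\rho_{j,\theta}^{-1})$. Moreover $\sum_j\widetilde{\mathbf I}_j(\theta)=\operatorname{Tr}(\varrho_\theta\widetilde{\mathbf H}(\theta)^2)$ with $\widetilde{\mathbf H}=\sum_j I^{\otimes(j-1)}\otimes\widetilde H_j\otimes I^{\otimes(n-j)}$. In particular, for $n=1$, $\operatorname{Var}_\theta(\Theta)\ge1/\widetilde{\mathbf I}(\theta)$, and if all $\rho_{j,\theta}=\rho_\theta$ then $\operatorname{Var}_\theta(\Theta)\ge1/(n\widetilde{\mathbf I}(\theta))$. *)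

theory Defs
  imports "HOL-Analysis.Analysis"
begin

text \<open>Operators on the finite-dimensional space H = C^d are represented as
  matrices  nat => nat => complex  of which only the entries with indices < d matter.
  Operators on the n-fold tensor power H^(tensor n) are represented as matrices indexed
  by multi-indices  i :: nat => nat  ranging over  {..<n} ->E {..<d}.\<close>

type_synonym cmat = "nat \<Rightarrow> nat \<Rightarrow> complex"
type_synonym tmat = "(nat \<Rightarrow> nat) \<Rightarrow> (nat \<Rightarrow> nat) \<Rightarrow> complex"

definition mtrace :: "nat \<Rightarrow> cmat \<Rightarrow> complex" where
  "mtrace d A = (\<Sum>i<d. A i i)"

definition mmult :: "nat \<Rightarrow> cmat \<Rightarrow> cmat \<Rightarrow> cmat" where
  "mmult d A B = (\<lambda>i k. \<Sum>j<d. A i j * B j k)"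

definition mid :: cmat where
  "mid = (\<lambda>i j. if i = j then 1 else 0)"

definition mhermitian :: "nat \<Rightarrow> cmat \<Rightarrow> bool" where
  "mhermitian d A \<longleftrightarrow> (\<forall>i<d. \<forall>j<d. A j i = cnj (A i j))"

definition mposdef :: "nat \<Rightarrow> cmat \<Rightarrow> bool" where
  "mposdef d A \<longleftrightarrow> mhermitian d A \<and>
     (\<forall>x :: nat \<Rightarrow> complex. (\<exists>i<d. x i \<noteq> 0) \<longrightarrow>
        0 < Re (\<Sum>i<d. \<Sum>j<d. cnj (x i) * A i j * x j))"

definition pd_density :: "nat \<Rightarrow> cmat \<Rightarrow> bool" where
  "pd_density d A \<longleftrightarrow> mposdef d A \<and> mtrace d A = 1"

text \<open>matrix inverse (well defined for invertible matrices, e.g. positive definite ones)\<close>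
definition minv :: "nat \<Rightarrow> cmat \<Rightarrow> cmat" where
  "minv d A = (SOME B. (\<forall>i<d. \<forall>k<d. mmult d A B i k = mid i k \<and> mmult d B A i k = mid i k))"

definition mderiv :: "(real \<Rightarrow> cmat) \<Rightarrow> real \<Rightarrow> cmat" where
  "mderiv rho \<theta> = (\<lambda>a b. vector_derivative (\<lambda>t. rho t a b) (at \<theta>))"

definition Htil :: "nat \<Rightarrow> (real \<Rightarrow> cmat) \<Rightarrow> real \<Rightarrow> cmat" where
  "Htil d rho \<theta> = (\<lambda>a b. (1/2) * (mmult d (minv d (rho \<theta>)) (mderiv rho \<theta>) a b
                                   + mmult d (mderiv rho \<theta>) (minv d (rho \<theta>)) a b))"

definition Itil :: "nat \<Rightarrow> (real \<Rightarrow> cmat) \<Rightarrow> real \<Rightarrow> complex" where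
  "Itil d rho \<theta> = mtrace d (mmult d (rho \<theta>) (mmult d (Htil d rho \<theta>) (Htil d rho \<theta>)))"

definition MI :: "nat \<Rightarrow> nat \<Rightarrow> (nat \<Rightarrow> nat) set" where
  "MI d n = ({..<n} \<rightarrow>\<^sub>E {..<d})"

definition ttrace :: "nat \<Rightarrow> nat \<Rightarrow> tmat \<Rightarrow> complex" where
  "ttrace d n A = (\<Sum>i\<in>MI d n. A i i)"

definition tmult :: "nat \<Rightarrow> nat \<Rightarrow> tmat \<Rightarrow> tmat \<Rightarrow> tmat" where
  "tmult d n A B = (\<lambda>i k. \<Sum>j\<in>MI d n. A i j * B j k)"

definition tid :: tmat where
  "tid = (\<lambda>i j. if i = j then 1 else 0)"

definition thermitian :: "nat \<Rightarrow> nat \<Rightarrow> tmat \<Rightarrow> bool" where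
  "thermitian d n A \<longleftrightarrow> (\<forall>i\<in>MI d n. \<forall>j\<in>MI d n. A j i = cnj (A i j))"

definition tensor_prod :: "nat \<Rightarrow> (nat \<Rightarrow> cmat) \<Rightarrow> tmat" where
  "tensor_prod n A = (\<lambda>i j. \<Prod>k<n. A k (i k) (j k))"

definition embed_at :: "nat \<Rightarrow> nat \<Rightarrow> cmat \<Rightarrow> tmat" where
  "embed_at n k A = (\<lambda>i j. A (i k) (j k) * (\<Prod>l\<in>{..<n} - {k}. mid (i l) (j l)))"

definition tvar :: "nat \<Rightarrow> nat \<Rightarrow> tmat \<Rightarrow> tmat \<Rightarrow> real \<Rightarrow> complex" where
  "tvar d n rho Th \<theta> =
     (let D = (\<lambda>i j. Th i j - complex_of_real \<theta> * tid i j)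
      in ttrace d n (tmult d n rho (tmult d n D D)))"

end

(* For a Gram matrix P = B B* the form <A, C>_P = Tr(P A C* ) is a positive
   semidefinite Hermitian form. Put K_j = rho_j^-1 rho_j' and let K be the sum of the K_j, each acting
   on its own tensor factor; the derivative of the product state is then rho K. Differentiating the
   unbiasedness condition gives <K, Theta - theta>_rho = Tr(rho' (Theta - theta)) = 1, and
   Cauchy-Schwarz yields 1 <= <K, K>_rho Var(Theta). Since Tr(rho_j K_j) = Tr(rho_j') = 0, the cross
   terms vanish in the product state and <K, K>_rho is the sum of the <K_j, K_j>_(rho_j). Finally,
   with Htil_j = (K_j + K_j* )/2 one finds Tr(rho_j Htil_j^2) = (3 <K_j, K_j> + <K_j*, K_j*>)/4, and
   <K_j, K_j> = <K_j, K_j*> together with Cauchy-Schwarz gives <K_j, K_j> <= <K_j*, K_j*>, so each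
   <K_j, K_j> is bounded by Itil_j. *)

theory Submission
  imports Defs "Jordan_Normal_Form.Determinant"
begin

section \<open>Matrices indexed by a finite set\<close>

type_synonym 'a sqmat = "'a \<Rightarrow> 'a \<Rightarrow> complex"

definition mult_on :: "'a set \<Rightarrow> 'a sqmat \<Rightarrow> 'a sqmat \<Rightarrow> 'a sqmat" where
  "mult_on S A B = (\<lambda>i k. \<Sum>j\<in>S. A i j * B j k)"

definition trace_on :: "'a set \<Rightarrow> 'a sqmat \<Rightarrow> complex" where
  "trace_on S A = (\<Sum>i\<in>S. A i i)"

definition adj :: "'a sqmat \<Rightarrow> 'a sqmat" where
  "adj A = (\<lambda>i k. cnj (A k i))"

text \<open>Matrices are total functions; only the entries indexed by S carry meaning, so identities
  between them hold up to eq_on S.\<close>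
definition eq_on :: "'a set \<Rightarrow> 'a sqmat \<Rightarrow> 'a sqmat \<Rightarrow> bool" where
  "eq_on S A B \<longleftrightarrow> (\<forall>i\<in>S. \<forall>k\<in>S. A i k = B i k)"

lemma mmult_eq_mult_on: "mmult d = mult_on {..<d}"
  by (auto simp: mmult_def mult_on_def fun_eq_iff)

lemma tmult_eq_mult_on: "tmult d n = mult_on (MI d n)"
  by (auto simp: tmult_def mult_on_def fun_eq_iff)

lemma mtrace_eq_trace_on: "mtrace d = trace_on {..<d}"
  by (auto simp: mtrace_def trace_on_def fun_eq_iff)

lemma ttrace_eq_trace_on: "ttrace d n = trace_on (MI d n)"
  by (auto simp: ttrace_def trace_on_def fun_eq_iff)

lemma eq_onI: "(\<And>i k. i \<in> S \<Longrightarrow> k \<in> S \<Longrightarrow> A i k = B i k) \<Longrightarrow> eq_on S A B"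
  by (simp add: eq_on_def)

lemma eq_on_refl [simp]: "eq_on S A A"
  by (simp add: eq_on_def)

lemma eq_on_sym: "eq_on S A B \<Longrightarrow> eq_on S B A"
  by (simp add: eq_on_def)

lemma eq_on_trans [trans]: "eq_on S A B \<Longrightarrow> eq_on S B C \<Longrightarrow> eq_on S A C"
  by (simp add: eq_on_def)

lemma mult_on_cong: "eq_on S A A' \<Longrightarrow> eq_on S B B' \<Longrightarrow> eq_on S (mult_on S A B) (mult_on S A' B')"
  by (simp add: eq_on_def mult_on_def)

lemma mult_on_cong_left: "eq_on S A A' \<Longrightarrow> eq_on S (mult_on S A B) (mult_on S A' B)"
  by (rule mult_on_cong) auto

lemma mult_on_cong_right: "eq_on S B B' \<Longrightarrow> eq_on S (mult_on S A B) (mult_on S A B')"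
  by (rule mult_on_cong) auto

lemma trace_on_cong: "eq_on S A A' \<Longrightarrow> trace_on S A = trace_on S A'"
  by (simp add: eq_on_def trace_on_def)

lemma adj_cong: "eq_on S A A' \<Longrightarrow> eq_on S (adj A) (adj A')"
  by (simp add: eq_on_def adj_def)

lemma adj_adj [simp]: "adj (adj A) = A"
  by (simp add: adj_def)

lemma mult_on_assoc: "mult_on S (mult_on S A B) C = mult_on S A (mult_on S B C)"
proof -
  have "(\<Sum>j\<in>S. (\<Sum>m\<in>S. A i m * B m j) * C j k) = (\<Sum>m\<in>S. A i m * (\<Sum>j\<in>S. B m j * C j k))"
    for i k unfolding sum_distrib_left sum_distrib_right mult.assoc by (rule sum.swap)
  then show ?thesis
    by (simp add: mult_on_def fun_eq_iff)
qed

lemma trace_on_mult_commute: "trace_on S (mult_on S A B) = trace_on S (mult_on S B A)"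
  unfolding trace_on_def mult_on_def by (subst sum.swap) (simp add: mult.commute)

lemma adj_mult_on: "adj (mult_on S A B) = mult_on S (adj B) (adj A)"
  by (simp add: adj_def mult_on_def fun_eq_iff mult.commute)

lemma adj_sum: "adj (\<lambda>i k. \<Sum>j\<in>J. F j i k) = (\<lambda>i k. \<Sum>j\<in>J. adj (F j) i k)"
  by (simp add: adj_def)

lemma mult_on_add_left: "mult_on S (\<lambda>i k. A i k + B i k) C = (\<lambda>i k. mult_on S A C i k + mult_on S B C i k)"
  by (simp add: mult_on_def distrib_right sum.distrib fun_eq_iff)

lemma mult_on_add_right: "mult_on S C (\<lambda>i k. A i k + B i k) = (\<lambda>i k. mult_on S C A i k + mult_on S C B i k)"
  by (simp add: mult_on_def distrib_left sum.distrib fun_eq_iff)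

lemma mult_on_diff_right: "mult_on S C (\<lambda>i k. A i k - B i k) = (\<lambda>i k. mult_on S C A i k - mult_on S C B i k)"
  by (simp add: mult_on_def right_diff_distrib sum_subtractf fun_eq_iff)

lemma mult_on_scale_left: "mult_on S (\<lambda>i k. c * A i k) C = (\<lambda>i k. c * mult_on S A C i k)"
  by (simp add: mult_on_def sum_distrib_left mult.assoc fun_eq_iff)

lemma mult_on_scale_right: "mult_on S C (\<lambda>i k. c * A i k) = (\<lambda>i k. c * mult_on S C A i k)"
  by (simp add: mult_on_def sum_distrib_left mult.left_commute fun_eq_iff)

lemma mult_on_sum_left: "mult_on S (\<lambda>i k. \<Sum>j\<in>J. F j i k) C = (\<lambda>i k. \<Sum>j\<in>J. mult_on S (F j) C i k)"
  unfolding mult_on_def fun_eq_iff sum_distrib_right by (auto intro: sum.swap)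

lemma mult_on_sum_right: "mult_on S C (\<lambda>i k. \<Sum>j\<in>J. F j i k) = (\<lambda>i k. \<Sum>j\<in>J. mult_on S C (F j) i k)"
  unfolding mult_on_def fun_eq_iff sum_distrib_left by (auto intro: sum.swap)

lemma trace_on_add: "trace_on S (\<lambda>i k. A i k + B i k) = trace_on S A + trace_on S B"
  by (simp add: trace_on_def sum.distrib)

lemma trace_on_diff: "trace_on S (\<lambda>i k. A i k - B i k) = trace_on S A - trace_on S B"
  by (simp add: trace_on_def sum_subtractf)

lemma trace_on_scale: "trace_on S (\<lambda>i k. c * A i k) = c * trace_on S A"
  by (simp add: trace_on_def sum_distrib_left)

lemma trace_on_sum: "trace_on S (\<lambda>i k. \<Sum>j\<in>J. F j i k) = (\<Sum>j\<in>J. trace_on S (F j))"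
  unfolding trace_on_def by (rule sum.swap)

lemma mult_on_id_left:
  assumes "finite S"
  shows "eq_on S (mult_on S (\<lambda>i j. if i = j then 1 else 0) A) A"
proof (rule eq_onI)
  fix i k assume "i \<in> S"
  have "(\<Sum>j\<in>S. (if i = j then 1 else 0) * A j k) = (\<Sum>j\<in>S. if i = j then A j k else 0)"
    by (rule sum.cong) auto
  then show "mult_on S (\<lambda>i j. if i = j then 1 else 0) A i k = A i k"
    using assms \<open>i \<in> S\<close> by (simp add: mult_on_def)
qed

lemma mult_on_id_right:
  assumes "finite S"
  shows "eq_on S (mult_on S A (\<lambda>i j. if i = j then 1 else 0)) A"
proof (rule eq_onI)
  fix i k assume "k \<in> S"
  have "(\<Sum>j\<in>S. A i j * (if j = k then 1 else 0)) = (\<Sum>j\<in>S. if k = j then A i j else 0)"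
    by (rule sum.cong) auto
  then show "mult_on S A (\<lambda>i j. if i = j then 1 else 0) i k = A i k"
    using assms \<open>k \<in> S\<close> by (simp add: mult_on_def)
qed

lemma adj_mid [simp]: "adj mid = mid"
  by (auto simp: adj_def mid_def fun_eq_iff)

lemma mult_on_mid_left: "eq_on {..<d} (mult_on {..<d} mid A) A"
  unfolding mid_def by (rule mult_on_id_left) simp

lemma mult_on_mid_right: "eq_on {..<d} (mult_on {..<d} A mid) A"
  unfolding mid_def by (rule mult_on_id_right) simp

lemma trace_on_mult_adj:
  "trace_on S (mult_on S A (adj C)) = (\<Sum>i\<in>S. \<Sum>k\<in>S. A i k * cnj (C i k))"
  by (simp add: trace_on_def mult_on_def adj_def)

section \<open>Gram matrices and the weighted inner product\<close>

definition gram_on :: "'a set \<Rightarrow> 'a sqmat \<Rightarrow> bool" where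
  "gram_on S P \<longleftrightarrow> (\<exists>B. eq_on S P (mult_on S B (adj B)))"

definition weighted_inner :: "'a set \<Rightarrow> 'a sqmat \<Rightarrow> 'a sqmat \<Rightarrow> 'a sqmat \<Rightarrow> complex" where
  "weighted_inner S P A C = trace_on S (mult_on S P (mult_on S A (adj C)))"

lemma gram_on_hermitian:
  assumes "gram_on S P"
  shows "eq_on S (adj P) P"
proof -
  obtain B where B: "eq_on S P (mult_on S B (adj B))"
    using assms unfolding gram_on_def by blast
  have "eq_on S (adj P) (adj (mult_on S B (adj B)))" by (rule adj_cong[OF B])
  also have "adj (mult_on S B (adj B)) = mult_on S B (adj B)" by (simp add: adj_mult_on)
  also have "eq_on S \<dots> P" by (rule eq_on_sym[OF B])
  finally show ?thesis .
qed

lemma weighted_inner_factor: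
  assumes "eq_on S P (mult_on S B (adj B))"
  shows "weighted_inner S P A C
           = (\<Sum>i\<in>S. \<Sum>k\<in>S. mult_on S (adj B) A i k * cnj (mult_on S (adj B) C i k))"
proof -
  have "weighted_inner S P A C = trace_on S (mult_on S (mult_on S B (adj B)) (mult_on S A (adj C)))"
    unfolding weighted_inner_def by (rule trace_on_cong[OF mult_on_cong_left[OF assms]])
  also have "\<dots> = trace_on S (mult_on S B (mult_on S (adj B) (mult_on S A (adj C))))"
    by (simp add: mult_on_assoc)
  also have "\<dots> = trace_on S (mult_on S (mult_on S (adj B) (mult_on S A (adj C))) B)"
    by (rule trace_on_mult_commute)
  also have "\<dots> = trace_on S (mult_on S (mult_on S (adj B) A) (adj (mult_on S (adj B) C)))"
    by (simp add: mult_on_assoc adj_mult_on)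
  finally show ?thesis by (simp add: trace_on_mult_adj)
qed

lemma gram_on_weighted_inner_eq_sum:
  assumes "gram_on S P"
  obtains u where "\<And>A C. weighted_inner S P A C = (\<Sum>p\<in>S \<times> S. u A p * cnj (u C p))"
proof -
  obtain B where B: "eq_on S P (mult_on S B (adj B))"
    using assms unfolding gram_on_def by blast
  show ?thesis
    by (rule that[of "\<lambda>A (i, k). mult_on S (adj B) A i k"])
       (simp add: weighted_inner_factor[OF B] sum.cartesian_product case_prod_beta)
qed

lemma weighted_inner_self_real:
  assumes "gram_on S P"
  shows "weighted_inner S P A A = of_real (Re (weighted_inner S P A A))"
    and "0 \<le> Re (weighted_inner S P A A)"
proof -
  obtain u where u: "\<And>A C. weighted_inner S P A C = (\<Sum>p\<in>S \<times> S. u A p * cnj (u C p))"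
    using gram_on_weighted_inner_eq_sum[OF assms] by blast
  have "weighted_inner S P A A = of_real (\<Sum>p\<in>S \<times> S. (cmod (u A p))\<^sup>2)"
    unfolding u by (simp add: complex_norm_square[symmetric])
  then show "weighted_inner S P A A = of_real (Re (weighted_inner S P A A))"
    and "0 \<le> Re (weighted_inner S P A A)"
    by (simp_all add: sum_nonneg)
qed

lemma weighted_inner_commute:
  assumes "gram_on S P"
  shows "weighted_inner S P C A = cnj (weighted_inner S P A C)"
proof -
  obtain u where u: "\<And>A C. weighted_inner S P A C = (\<Sum>p\<in>S \<times> S. u A p * cnj (u C p))"
    using gram_on_weighted_inner_eq_sum[OF assms] by blast
  show ?thesis by (simp add: u mult.commute)
qed

lemma cmod_sum_mult_cnj_le:
  assumes "finite T"
  shows "(cmod (\<Sum>p\<in>T. a p * cnj (b p)))\<^sup>2 \<le> (\<Sum>p\<in>T. (cmod (a p))\<^sup>2) * (\<Sum>p\<in>T. (cmod (b p))\<^sup>2)"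
proof -
  have "cmod (\<Sum>p\<in>T. a p * cnj (b p)) \<le> (\<Sum>p\<in>T. \<bar>cmod (a p)\<bar> * \<bar>cmod (b p)\<bar>)"
    using norm_sum[of "\<lambda>p. a p * cnj (b p)" T] by (simp add: norm_mult)
  also have "\<dots> \<le> L2_set (\<lambda>p. cmod (a p)) T * L2_set (\<lambda>p. cmod (b p)) T"
    by (rule L2_set_mult_ineq)
  finally have "(cmod (\<Sum>p\<in>T. a p * cnj (b p)))\<^sup>2
                  \<le> (L2_set (\<lambda>p. cmod (a p)) T * L2_set (\<lambda>p. cmod (b p)) T)\<^sup>2"
    by (intro power_mono) auto
  also have "\<dots> = (\<Sum>p\<in>T. (cmod (a p))\<^sup>2) * (\<Sum>p\<in>T. (cmod (b p))\<^sup>2)"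
    by (simp add: L2_set_def power_mult_distrib sum_nonneg)
  finally show ?thesis .
qed

lemma weighted_inner_cauchy_schwarz:
  assumes "gram_on S P" and "finite S"
  shows "(cmod (weighted_inner S P A C))\<^sup>2
           \<le> Re (weighted_inner S P A A) * Re (weighted_inner S P C C)"
proof -
  obtain u where u: "\<And>A C. weighted_inner S P A C = (\<Sum>p\<in>S \<times> S. u A p * cnj (u C p))"
    using gram_on_weighted_inner_eq_sum[OF assms(1)] by blast
  have Re_self: "Re (weighted_inner S P X X) = (\<Sum>p\<in>S \<times> S. (cmod (u X p))\<^sup>2)" for X
    unfolding u by (simp add: complex_norm_square[symmetric])
  show ?thesis
    unfolding Re_self u[of A C] using assms(2) by (intro cmod_sum_mult_cnj_le) simp
qed

section \<open>Positive definite matrices\<close>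

lemma quadratic_form_lessThan_Suc:
  "(\<Sum>i<Suc d. \<Sum>j<Suc d. cnj (y i) * A i j * y j)
     = (\<Sum>i<d. \<Sum>j<d. cnj (y i) * A i j * y j) + (\<Sum>i<d. cnj (y i) * A i d) * y d
       + cnj (y d) * (\<Sum>j<d. A d j * y j) + cnj (y d) * A d d * y d"
  by (simp add: sum.distrib sum_distrib_left sum_distrib_right mult.assoc)

lemma mposdef_Suc_corner:
  assumes "mposdef (Suc d) A"
  shows "cnj (A d d) = A d d" and "0 < Re (A d d)"
proof -
  have "mhermitian (Suc d) A" and
    pos: "\<And>x. \<exists>i<Suc d. x i \<noteq> 0 \<Longrightarrow> 0 < Re (\<Sum>i<Suc d. \<Sum>j<Suc d. cnj (x i) * A i j * x j)"
    using assms unfolding mposdef_def by blast+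
  then show "cnj (A d d) = A d d"
    unfolding mhermitian_def by (metis lessI)
  have "0 < Re (\<Sum>i<Suc d. \<Sum>j<Suc d. cnj (if i = d then 1 else 0) * A i j * (if j = d then 1 else 0))"
    by (rule pos) auto
  then show "0 < Re (A d d)"
    by (simp add: if_distrib cong: if_cong)
qed

text \<open>y extends x by the last coordinate that minimises the form; the minimum is the form of the
  Schur complement of A d d.\<close>
lemma quadratic_form_schur_extension:
  fixes A :: cmat and x :: "nat \<Rightarrow> complex"
  assumes herm: "mhermitian (Suc d) A" and corner: "A d d \<noteq> 0"
  defines "c \<equiv> \<Sum>k<d. A d k * x k"
  defines "y \<equiv> \<lambda>i. if i < d then x i else if i = d then - c / A d d else 0"
  shows "(\<Sum>i<Suc d. \<Sum>j<Suc d. cnj (y i) * A i j * y j)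
           = (\<Sum>i<d. \<Sum>j<d. cnj (x i) * (A i j - A i d * A d j / A d d) * x j)"
proof -
  have herm': "\<And>i k. i < Suc d \<Longrightarrow> k < Suc d \<Longrightarrow> A k i = cnj (A i k)"
    using herm unfolding mhermitian_def by blast
  define a where "a = A d d"
  have a_real: "cnj a = a"
    using herm'[of d d] by (simp add: a_def)
  have yx: "\<And>i. i < d \<Longrightarrow> y i = x i" and yd: "y d = - c / a" and cyd: "cnj (y d) = - cnj c / a"
    using a_real by (simp_all add: y_def a_def)
  have row: "(\<Sum>i<d. cnj (x i) * A i d) = cnj c"
  proof -
    have "cnj c = (\<Sum>k<d. cnj (A d k) * cnj (x k))" by (simp add: c_def)
    also have "\<dots> = (\<Sum>i<d. cnj (x i) * A i d)"
    proof (rule sum.cong)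
      fix k assume "k \<in> {..<d}"
      then show "cnj (A d k) * cnj (x k) = cnj (x k) * A k d" using herm'[of k d] by simp
    qed simp
    finally show ?thesis by simp
  qed
  have extended: "(\<Sum>i<Suc d. \<Sum>j<Suc d. cnj (y i) * A i j * y j)
                    = (\<Sum>i<d. \<Sum>j<d. cnj (x i) * A i j * x j) - cnj c * c / a"
  proof -
    have "(\<Sum>i<d. \<Sum>j<d. cnj (y i) * A i j * y j) = (\<Sum>i<d. \<Sum>j<d. cnj (x i) * A i j * x j)"
      by (intro sum.cong refl) (simp add: yx)
    moreover have "(\<Sum>i<d. cnj (y i) * A i d) = cnj c"
      unfolding row[symmetric] by (intro sum.cong refl) (simp add: yx)
    moreover have "(\<Sum>j<d. A d j * y j) = c"
      unfolding c_def by (intro sum.cong refl) (simp add: yx)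
    ultimately show ?thesis
      unfolding quadratic_form_lessThan_Suc yd cyd using corner by (simp add: a_def[symmetric] field_simps)
  qed
  have "(\<Sum>i<d. \<Sum>j<d. cnj (x i) * A i d * (A d j * x j) / A d d)
          = (\<Sum>i<d. cnj (x i) * A i d * c / A d d)"
    unfolding c_def by (simp add: sum_distrib_left sum_divide_distrib)
  also have "\<dots> = cnj c * c / a"
    unfolding row[symmetric] a_def by (simp add: sum_distrib_right sum_divide_distrib)
  finally have cross: "(\<Sum>i<d. \<Sum>j<d. cnj (x i) * A i d * (A d j * x j) / A d d) = cnj c * c / a" .
  have "cnj (x i) * (A i j - A i d * A d j / A d d) * x j
          = cnj (x i) * A i j * x j - cnj (x i) * A i d * (A d j * x j) / A d d" for i j
    by (simp add: algebra_simps)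
  then show ?thesis
    by (simp only: extended sum_subtractf cross)
qed

lemma mposdef_schur_complement:
  assumes pd: "mposdef (Suc d) A"
  shows "mposdef d (\<lambda>i k. A i k - A i d * A d k / A d d)"
  unfolding mposdef_def mhermitian_def
proof (intro conjI allI impI)
  have herm: "mhermitian (Suc d) A"
    using pd unfolding mposdef_def by (rule conjunct1)
  then have herm': "\<And>i k. i < Suc d \<Longrightarrow> k < Suc d \<Longrightarrow> A k i = cnj (A i k)"
    unfolding mhermitian_def by blast
  note corner = mposdef_Suc_corner[OF pd]
  show "A j i - A j d * A d i / A d d = cnj (A i j - A i d * A d j / A d d)" if "i < d" "j < d" for i j
    using herm'[of i j] herm'[of i d] herm'[of d j] that corner(1) by simp
  fix x :: "nat \<Rightarrow> complex" assume "\<exists>i<d. x i \<noteq> 0"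
  define y where "y = (\<lambda>i. if i < d then x i else if i = d then - (\<Sum>k<d. A d k * x k) / A d d else 0)"
  have "\<exists>i<Suc d. y i \<noteq> 0"
    using \<open>\<exists>i<d. x i \<noteq> 0\<close> less_SucI unfolding y_def by metis
  then have "0 < Re (\<Sum>i<Suc d. \<Sum>j<Suc d. cnj (y i) * A i j * y j)"
    using pd unfolding mposdef_def by blast
  also have "(\<Sum>i<Suc d. \<Sum>j<Suc d. cnj (y i) * A i j * y j)
               = (\<Sum>i<d. \<Sum>j<d. cnj (x i) * (A i j - A i d * A d j / A d d) * x j)"
    unfolding y_def using herm corner(2) by (intro quadratic_form_schur_extension) auto
  finally show "0 < Re (\<Sum>i<d. \<Sum>j<d. cnj (x i) * (A i j - A i d * A d j / A d d) * x j)" .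
qed

lemma mposdef_cholesky:
  "mposdef d A \<Longrightarrow> \<exists>B. \<forall>i<d. \<forall>k<d. A i k = (\<Sum>j<d. B i j * cnj (B k j))"
proof (induction d arbitrary: A)
  case 0
  show ?case by simp
next
  case (Suc d)
  have herm: "\<And>i k. i < Suc d \<Longrightarrow> k < Suc d \<Longrightarrow> A k i = cnj (A i k)"
    using Suc.prems unfolding mposdef_def mhermitian_def by blast
  note corner = mposdef_Suc_corner[OF Suc.prems]
  obtain B' where B': "\<And>i k. i < d \<Longrightarrow> k < d \<Longrightarrow>
      A i k - A i d * A d k / A d d = (\<Sum>j<d. B' i j * cnj (B' k j))"
    using Suc.IH[OF mposdef_schur_complement[OF Suc.prems]] by blast
  define s where "s = complex_of_real (sqrt (Re (A d d)))"
  have s: "cnj s = s" "s * s = A d d" "s \<noteq> 0"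
    using corner by (auto simp: s_def complex_eq_iff simp flip: of_real_mult)
  define B where "B = (\<lambda>i j. if j < d then (if i < d then B' i j else 0)
                            else if j = d then (if i < d then A i d / s else s) else 0)"
  have "A i k = (\<Sum>j<Suc d. B i j * cnj (B k j))" if ik: "i < Suc d" "k < Suc d" for i k
  proof -
    have "(\<Sum>j<Suc d. B i j * cnj (B k j))
            = (\<Sum>j<d. B i j * cnj (B k j)) + B i d * cnj (B k d)"
      by simp
    moreover have "B i d * cnj (B k d) = A i d * A d k / A d d"
      using ik s herm[of k d] by (auto simp: B_def less_Suc_eq)
    moreover have "(\<Sum>j<d. B i j * cnj (B k j)) = (if i < d \<and> k < d then A i k - A i d * A d k / A d d else 0)"
      by (cases "i < d \<and> k < d") (auto simp: B_def B' intro!: sum.neutral)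
    ultimately show ?thesis
      using ik corner by (auto simp: less_Suc_eq)
  qed
  then show ?case by blast
qed

lemma mposdef_gram_on: "mposdef d A \<Longrightarrow> gram_on {..<d} A"
  unfolding gram_on_def eq_on_def mult_on_def adj_def
  using mposdef_cholesky by fastforce

lemma mposdef_det_nonzero:
  assumes pd: "mposdef d A"
  shows "det (mat d d (\<lambda>(i, j). A i j)) \<noteq> 0"
proof
  define M where "M = mat d d (\<lambda>(i, j). A i j)"
  assume "det (mat d d (\<lambda>(i, j). A i j)) = 0"
  then obtain v where v: "v \<in> carrier_vec d" "v \<noteq> 0\<^sub>v d" "M *\<^sub>v v = 0\<^sub>v d"
    using det_0_iff_vec_prod_zero_field[of M d] by (auto simp: M_def)
  define x where "x = (\<lambda>i. if i < d then vec_index v i else 0)"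
  have "\<exists>i<d. x i \<noteq> 0"
  proof (rule ccontr)
    assume "\<not> (\<exists>i<d. x i \<noteq> 0)"
    then have "v = 0\<^sub>v d" using v(1) by (intro eq_vecI) (auto simp: x_def)
    with v(2) show False by simp
  qed
  then have "0 < Re (\<Sum>i<d. \<Sum>j<d. cnj (x i) * A i j * x j)"
    using pd unfolding mposdef_def by blast
  moreover have "(\<Sum>j<d. A i j * x j) = vec_index (M *\<^sub>v v) i" if "i < d" for i
    using that v(1) by (auto simp: M_def scalar_prod_def row_def x_def atLeast0LessThan intro!: sum.cong)
  then have "(\<Sum>j<d. A i j * x j) = 0" if "i < d" for i
    using that v(3) by simp
  then have "(\<Sum>i<d. \<Sum>j<d. cnj (x i) * A i j * x j) = 0"
    by (simp add: mult.assoc flip: sum_distrib_left)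
  ultimately show False by simp
qed

lemma mposdef_minv:
  assumes "mposdef d A"
  shows "eq_on {..<d} (mult_on {..<d} A (minv d A)) mid"
    and "eq_on {..<d} (mult_on {..<d} (minv d A) A) mid"
proof -
  define M where "M = mat d d (\<lambda>(i, j). A i j)"
  have "M \<in> Units (ring_mat TYPE(complex) d ())"
    using det_non_zero_imp_unit[of M d] mposdef_det_nonzero[OF assms] by (simp add: M_def)
  then obtain N where N: "N \<in> carrier_mat d d" "N * M = 1\<^sub>m d" "M * N = 1\<^sub>m d"
    by (auto simp: Units_def ring_mat_def)
  define is_inverse where "is_inverse B \<longleftrightarrow> (\<forall>i<d. \<forall>k<d. mmult d A B i k = mid i k \<and> mmult d B A i k = mid i k)"
    for B
  have "mmult d A (\<lambda>i j. N $$ (i, j)) i k = (M * N) $$ (i, k)"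
    and "mmult d (\<lambda>i j. N $$ (i, j)) A i k = (N * M) $$ (i, k)" if "i < d" "k < d" for i k
    using that N(1) by (auto simp: M_def mmult_def scalar_prod_def row_def col_def atLeast0LessThan
        intro!: sum.cong)
  then have "is_inverse (\<lambda>i j. N $$ (i, j))"
    using N by (simp add: is_inverse_def mid_def)
  then have "is_inverse (minv d A)"
    unfolding minv_def is_inverse_def[symmetric] by (rule someI[where P = is_inverse])
  then show "eq_on {..<d} (mult_on {..<d} A (minv d A)) mid"
    and "eq_on {..<d} (mult_on {..<d} (minv d A) A) mid"
    by (simp_all add: is_inverse_def eq_on_def mmult_eq_mult_on)
qed

section \<open>Tensor products\<close>

lemma finite_MI [simp]: "finite (MI d n)"
  by (simp add: MI_def finite_PiE)

lemma MI_less: "i \<in> MI d n \<Longrightarrow> l < n \<Longrightarrow> i l < d"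
  by (auto simp: MI_def PiE_iff)

lemma sum_MI_prod:
  fixes f :: "nat \<Rightarrow> nat \<Rightarrow> 'a::comm_semiring_1"
  shows "(\<Sum>m\<in>MI d n. \<Prod>l<n. f l (m l)) = (\<Prod>l<n. \<Sum>a<d. f l a)"
  using prod_sum_PiE[of "{..<n}" "\<lambda>_. {..<d}" f] by (simp add: MI_def)

lemma mult_on_tensor_prod:
  "mult_on (MI d n) (tensor_prod n A) (tensor_prod n B) = tensor_prod n (\<lambda>l. mult_on {..<d} (A l) (B l))"
  using sum_MI_prod[where f = "\<lambda>l a. A l (_ l) a * B l a (_ l)"]
  by (simp add: fun_eq_iff mult_on_def tensor_prod_def prod.distrib)

lemma trace_on_tensor_prod: "trace_on (MI d n) (tensor_prod n A) = (\<Prod>l<n. trace_on {..<d} (A l))"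
  using sum_MI_prod[where f = "\<lambda>l a. A l a a"] by (simp add: trace_on_def tensor_prod_def)

lemma adj_tensor_prod: "adj (tensor_prod n A) = tensor_prod n (\<lambda>l. adj (A l))"
  by (simp add: adj_def tensor_prod_def fun_eq_iff)

lemma tensor_prod_cong:
  assumes "\<And>l. l < n \<Longrightarrow> eq_on {..<d} (A l) (B l)"
  shows "eq_on (MI d n) (tensor_prod n A) (tensor_prod n B)"
  using assms by (auto simp: eq_on_def tensor_prod_def MI_less intro!: prod.cong)

lemma embed_at_eq_tensor_prod:
  assumes "j < n"
  shows "embed_at n j C = tensor_prod n (\<lambda>l. if l = j then C else mid)"
proof (intro ext)
  fix i k
  have "tensor_prod n (\<lambda>l. if l = j then C else mid) i k
          = C (i j) (k j) * (\<Prod>l\<in>{..<n} - {j}. (if l = j then C else mid) (i l) (k l))"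
    unfolding tensor_prod_def using assms by (subst prod.remove[of _ j]) auto
  then show "embed_at n j C i k = tensor_prod n (\<lambda>l. if l = j then C else mid) i k"
    unfolding embed_at_def by (auto intro!: prod.cong)
qed

lemma adj_embed_at:
  assumes "j < n"
  shows "adj (embed_at n j C) = embed_at n j (adj C)"
proof -
  have "(\<lambda>l. adj (if l = j then C else mid)) = (\<lambda>l. if l = j then adj C else mid)"
    by auto
  then show ?thesis
    using assms by (simp add: embed_at_eq_tensor_prod adj_tensor_prod)
qed

lemma gram_on_tensor_prod:
  assumes "\<And>l. l < n \<Longrightarrow> gram_on {..<d} (\<rho> l)"
  shows "gram_on (MI d n) (tensor_prod n \<rho>)"
proof -
  obtain B where B: "\<And>l. l < n \<Longrightarrow> eq_on {..<d} (\<rho> l) (mult_on {..<d} (B l) (adj (B l)))"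
    using assms unfolding gram_on_def by metis
  have "eq_on (MI d n) (tensor_prod n \<rho>) (tensor_prod n (\<lambda>l. mult_on {..<d} (B l) (adj (B l))))"
    by (rule tensor_prod_cong[OF B])
  then show ?thesis
    unfolding gram_on_def mult_on_tensor_prod[symmetric] adj_tensor_prod[symmetric] by blast
qed

lemma trace_on_mult_mid_mid: "trace_on {..<d} (mult_on {..<d} \<rho> (mult_on {..<d} mid mid)) = trace_on {..<d} \<rho>"
  by (rule trace_on_cong) (rule eq_on_trans[OF mult_on_cong_right[OF mult_on_mid_left] mult_on_mid_right])

lemma trace_tensor_prod_embed_pair:
  assumes tr: "\<And>l. l < n \<Longrightarrow> trace_on {..<d} (\<rho> l) = 1" and "j < n" "k < n"
  shows "trace_on (MI d n) (mult_on (MI d n) (tensor_prod n \<rho>) (mult_on (MI d n) (embed_at n j M) (embed_at n k N)))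
           = (if j = k then trace_on {..<d} (mult_on {..<d} (\<rho> j) (mult_on {..<d} M N))
              else trace_on {..<d} (mult_on {..<d} (\<rho> j) M) * trace_on {..<d} (mult_on {..<d} (\<rho> k) N))"
proof -
  let ?T = "{..<d}"
  define g where "g l = trace_on ?T (mult_on ?T (\<rho> l)
                          (mult_on ?T (if l = j then M else mid) (if l = k then N else mid)))" for l
  have rest: "g l = 1" if "l < n" "l \<noteq> j" "l \<noteq> k" for l
    using that tr by (simp add: g_def trace_on_mult_mid_mid)
  have "trace_on (MI d n) (mult_on (MI d n) (tensor_prod n \<rho>) (mult_on (MI d n) (embed_at n j M) (embed_at n k N)))
          = (\<Prod>l<n. g l)"
    using assms by (simp add: g_def embed_at_eq_tensor_prod mult_on_tensor_prod trace_on_tensor_prod)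
  also have "\<dots> = (if j = k then g j else g j * g k)"
  proof (cases "j = k")
    case True
    then show ?thesis
      using assms rest by (simp add: prod.remove[of "{..<n}" j] prod.neutral)
  next
    case False
    have "(\<Prod>l<n. g l) = g j * (g k * (\<Prod>l\<in>{..<n} - {j} - {k}. g l))"
      using assms False by (simp add: prod.remove[of "{..<n}" j] prod.remove[of "{..<n} - {j}" k])
    then show ?thesis
      using False rest by (simp add: prod.neutral)
  qed
  also have "\<dots> = (if j = k then trace_on ?T (mult_on ?T (\<rho> j) (mult_on ?T M N))
                     else trace_on ?T (mult_on ?T (\<rho> j) M) * trace_on ?T (mult_on ?T (\<rho> k) N))"
  proof -
    have "trace_on ?T (mult_on ?T (\<rho> j) (mult_on ?T M mid)) = trace_on ?T (mult_on ?T (\<rho> j) M)"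
      by (intro trace_on_cong mult_on_cong_right mult_on_mid_right)
    moreover have "trace_on ?T (mult_on ?T (\<rho> k) (mult_on ?T mid N)) = trace_on ?T (mult_on ?T (\<rho> k) N)"
      by (intro trace_on_cong mult_on_cong_right mult_on_mid_left)
    ultimately show ?thesis by (simp add: g_def)
  qed
  finally show ?thesis .
qed

lemma trace_tensor_prod_embed_sums:
  assumes tr: "\<And>l. l < n \<Longrightarrow> trace_on {..<d} (\<rho> l) = 1"
    and centred: "\<And>j. j < n \<Longrightarrow> trace_on {..<d} (mult_on {..<d} (\<rho> j) (M j)) = 0"
  shows "trace_on (MI d n) (mult_on (MI d n) (tensor_prod n \<rho>)
            (mult_on (MI d n) (\<lambda>i k. \<Sum>j<n. embed_at n j (M j) i k) (\<lambda>i k. \<Sum>j<n. embed_at n j (N j) i k)))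
         = (\<Sum>j<n. trace_on {..<d} (mult_on {..<d} (\<rho> j) (mult_on {..<d} (M j) (N j))))"
proof -
  let ?S = "MI d n"
  have "trace_on ?S (mult_on ?S (tensor_prod n \<rho>)
            (mult_on ?S (\<lambda>i k. \<Sum>j<n. embed_at n j (M j) i k) (\<lambda>i k. \<Sum>j<n. embed_at n j (N j) i k)))
          = (\<Sum>j<n. \<Sum>k<n. trace_on ?S (mult_on ?S (tensor_prod n \<rho>)
                                (mult_on ?S (embed_at n j (M j)) (embed_at n k (N k)))))"
    by (simp only: mult_on_sum_left mult_on_sum_right trace_on_sum)
  also have "\<dots> = (\<Sum>j<n. \<Sum>k<n. if j = k then trace_on {..<d} (mult_on {..<d} (\<rho> j) (mult_on {..<d} (M j) (N j))) else 0)"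
    using centred by (intro sum.cong refl) (simp add: trace_tensor_prod_embed_pair[OF tr])
  finally show ?thesis by simp
qed

section \<open>One factor of the model\<close>

text \<open>A single factor at a fixed parameter: \<rho> is the density matrix, R its inverse and D its
  derivative; score is \<rho>^-1 \<rho>' and sym_score the paper's Htil.\<close>
locale density_tangent =
  fixes d :: nat and \<rho> R D :: cmat
  assumes gram: "gram_on {..<d} \<rho>"
    and right_inverse: "eq_on {..<d} (mult_on {..<d} \<rho> R) mid"
    and left_inverse: "eq_on {..<d} (mult_on {..<d} R \<rho>) mid"
    and tangent_hermitian: "eq_on {..<d} (adj D) D"
    and tangent_traceless: "trace_on {..<d} D = 0"
begin

definition score :: cmat where
  "score = mult_on {..<d} R D"

definition sym_score :: cmat where
  "sym_score = (\<lambda>a b. 1/2 * (mult_on {..<d} R D a b + mult_on {..<d} D R a b))"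

lemma inverse_hermitian: "eq_on {..<d} (adj R) R"
proof -
  let ?T = "{..<d}"
  have "eq_on ?T (adj R) (mult_on ?T (adj R) mid)"
    by (rule eq_on_sym[OF mult_on_mid_right])
  also have "eq_on ?T \<dots> (mult_on ?T (adj R) (mult_on ?T \<rho> R))"
    by (rule mult_on_cong_right[OF eq_on_sym[OF right_inverse]])
  also have "mult_on ?T (adj R) (mult_on ?T \<rho> R) = mult_on ?T (mult_on ?T (adj R) \<rho>) R"
    by (simp add: mult_on_assoc)
  also have "eq_on ?T \<dots> (mult_on ?T (mult_on ?T (adj R) (adj \<rho>)) R)"
    by (intro mult_on_cong_left mult_on_cong_right eq_on_sym[OF gram_on_hermitian[OF gram]])
  also have "mult_on ?T (mult_on ?T (adj R) (adj \<rho>)) R = mult_on ?T (adj (mult_on ?T \<rho> R)) R"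
    by (simp add: adj_mult_on)
  also have "eq_on ?T \<dots> (mult_on ?T (adj mid) R)"
    by (intro mult_on_cong_left adj_cong right_inverse)
  also have "eq_on ?T \<dots> R"
    by (simp add: mult_on_mid_left)
  finally show ?thesis .
qed

lemma adj_score: "eq_on {..<d} (adj score) (mult_on {..<d} D R)"
  unfolding score_def adj_mult_on by (rule mult_on_cong[OF tangent_hermitian inverse_hermitian])

lemma rho_score: "eq_on {..<d} (mult_on {..<d} \<rho> score) D"
proof -
  have "eq_on {..<d} (mult_on {..<d} \<rho> score) (mult_on {..<d} (mult_on {..<d} \<rho> R) D)"
    by (simp add: score_def mult_on_assoc)
  also have "eq_on {..<d} \<dots> (mult_on {..<d} mid D)"
    by (rule mult_on_cong_left[OF right_inverse])
  also have "eq_on {..<d} \<dots> D"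
    by (rule mult_on_mid_left)
  finally show ?thesis .
qed

lemma trace_rho_score: "trace_on {..<d} (mult_on {..<d} \<rho> score) = 0"
  using trace_on_cong[OF rho_score] tangent_traceless by simp

lemma trace_rho_adj_score: "trace_on {..<d} (mult_on {..<d} \<rho> (adj score)) = 0"
proof -
  let ?T = "{..<d}"
  have "trace_on ?T (mult_on ?T \<rho> (adj score)) = trace_on ?T (mult_on ?T \<rho> (mult_on ?T D R))"
    by (rule trace_on_cong[OF mult_on_cong_right[OF adj_score]])
  also have "\<dots> = trace_on ?T (mult_on ?T (mult_on ?T D R) \<rho>)"
    by (rule trace_on_mult_commute)
  also have "\<dots> = trace_on ?T (mult_on ?T D (mult_on ?T R \<rho>))"
    by (simp add: mult_on_assoc)
  also have "\<dots> = trace_on ?T (mult_on ?T D mid)"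
    by (rule trace_on_cong[OF mult_on_cong_right[OF left_inverse]])
  also have "\<dots> = trace_on ?T D"
    by (rule trace_on_cong[OF mult_on_mid_right])
  finally show ?thesis
    using tangent_traceless by simp
qed

lemma sym_score_eq: "eq_on {..<d} sym_score (\<lambda>a b. 1/2 * (score a b + adj score a b))"
  using adj_score by (auto simp: eq_on_def sym_score_def score_def)

lemma trace_rho_sym_score: "trace_on {..<d} (mult_on {..<d} \<rho> sym_score) = 0"
proof -
  let ?T = "{..<d}"
  have "trace_on ?T (mult_on ?T \<rho> sym_score)
          = trace_on ?T (mult_on ?T \<rho> (\<lambda>a b. 1/2 * (score a b + adj score a b)))"
    by (rule trace_on_cong[OF mult_on_cong_right[OF sym_score_eq]])
  also have "\<dots> = 1/2 * (trace_on ?T (mult_on ?T \<rho> score) + trace_on ?T (mult_on ?T \<rho> (adj score)))"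
    by (simp only: mult_on_add_right mult_on_scale_right trace_on_add trace_on_scale)
  finally show ?thesis
    by (simp add: trace_rho_score trace_rho_adj_score)
qed

text \<open>Since \<rho> score = D is Hermitian, Tr(\<rho> K K) = Tr(D R D) = Tr(\<rho> K K*) for K = score.\<close>
lemma weighted_inner_score_adj_score:
  "weighted_inner {..<d} \<rho> score (adj score) = weighted_inner {..<d} \<rho> score score"
proof -
  let ?T = "{..<d}"
  have "weighted_inner ?T \<rho> score (adj score) = trace_on ?T (mult_on ?T (mult_on ?T \<rho> score) score)"
    by (simp add: weighted_inner_def mult_on_assoc)
  also have "\<dots> = trace_on ?T (mult_on ?T D score)"
    by (rule trace_on_cong[OF mult_on_cong_left[OF rho_score]])
  also have "\<dots> = trace_on ?T (mult_on ?T (mult_on ?T D R) D)"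
    by (simp add: score_def mult_on_assoc)
  also have "\<dots> = trace_on ?T (mult_on ?T D (mult_on ?T D R))"
    by (rule trace_on_mult_commute)
  also have "\<dots> = trace_on ?T (mult_on ?T D (adj score))"
    by (rule trace_on_cong[OF mult_on_cong_right[OF eq_on_sym[OF adj_score]]])
  also have "\<dots> = trace_on ?T (mult_on ?T (mult_on ?T \<rho> score) (adj score))"
    by (rule trace_on_cong[OF mult_on_cong_left[OF eq_on_sym[OF rho_score]]])
  also have "\<dots> = weighted_inner ?T \<rho> score score"
    by (simp add: weighted_inner_def mult_on_assoc)
  finally show ?thesis .
qed

lemma score_norm_le_adj_score_norm:
  "Re (weighted_inner {..<d} \<rho> score score) \<le> Re (weighted_inner {..<d} \<rho> (adj score) (adj score))"
proof -
  let ?w = "weighted_inner {..<d} \<rho>"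
  obtain a where a: "?w score score = of_real a"
    using weighted_inner_self_real(1)[OF gram] by metis
  define b where "b = Re (?w (adj score) (adj score))"
  have "(cmod (?w score (adj score)))\<^sup>2 \<le> Re (?w score score) * b"
    unfolding b_def by (rule weighted_inner_cauchy_schwarz[OF gram]) simp
  then have "a\<^sup>2 \<le> a * b"
    by (simp add: weighted_inner_score_adj_score a)
  moreover have "0 \<le> a" "0 \<le> b"
    using weighted_inner_self_real(2)[OF gram] a unfolding b_def by (metis Re_complex_of_real)+
  ultimately show ?thesis
    by (cases "a = 0") (auto simp: a b_def power2_eq_square)
qed

lemma trace_rho_sym_score_square:
  "trace_on {..<d} (mult_on {..<d} \<rho> (mult_on {..<d} sym_score sym_score))
     = of_real ((3 * Re (weighted_inner {..<d} \<rho> score score)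
                 + Re (weighted_inner {..<d} \<rho> (adj score) (adj score))) / 4)"
proof -
  let ?T = "{..<d}" and ?w = "weighted_inner {..<d} \<rho>"
  obtain a b where a: "?w score score = of_real a" and b: "?w (adj score) (adj score) = of_real b"
    using weighted_inner_self_real(1)[OF gram] by metis
  have cross: "?w (adj score) score = of_real a"
    using weighted_inner_commute[OF gram, where A = score and C = "adj score"]
    by (simp add: weighted_inner_score_adj_score a)
  have tr: "trace_on ?T (mult_on ?T \<rho> (mult_on ?T A C)) = ?w A (adj C)" for A C
    by (simp add: weighted_inner_def)
  have "trace_on ?T (mult_on ?T \<rho> (mult_on ?T sym_score sym_score))
          = trace_on ?T (mult_on ?T \<rho> (mult_on ?T (\<lambda>a b. 1/2 * (score a b + adj score a b))
                                              (\<lambda>a b. 1/2 * (score a b + adj score a b))))"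
    by (intro trace_on_cong mult_on_cong_right mult_on_cong sym_score_eq)
  also have "\<dots> = 1/4 * (trace_on ?T (mult_on ?T \<rho> (mult_on ?T score score))
                       + trace_on ?T (mult_on ?T \<rho> (mult_on ?T score (adj score)))
                       + trace_on ?T (mult_on ?T \<rho> (mult_on ?T (adj score) score))
                       + trace_on ?T (mult_on ?T \<rho> (mult_on ?T (adj score) (adj score))))"
    by (simp only: mult_on_add_left mult_on_add_right mult_on_scale_left mult_on_scale_right
        trace_on_add trace_on_scale) (simp add: algebra_simps)
  also have "\<dots> = of_real ((3 * a + b) / 4)"
    unfolding tr adj_adj weighted_inner_score_adj_score a b cross by simp
  finally show ?thesis
    by (simp add: a b)
qed

lemma trace_rho_sym_score_square_real:
  "trace_on {..<d} (mult_on {..<d} \<rho> (mult_on {..<d} sym_score sym_score)) \<in> \<real>"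
  unfolding trace_rho_sym_score_square by simp

lemma score_norm_le_trace_rho_sym_score_square:
  "Re (weighted_inner {..<d} \<rho> score score)
     \<le> Re (trace_on {..<d} (mult_on {..<d} \<rho> (mult_on {..<d} sym_score sym_score)))"
  unfolding trace_rho_sym_score_square using score_norm_le_adj_score_norm by simp

end

section \<open>The product model\<close>

lemma has_vector_derivative_prod_lessThan:
  fixes f :: "nat \<Rightarrow> real \<Rightarrow> complex"
  assumes "\<And>l. l < n \<Longrightarrow> (f l has_vector_derivative f' l) (at x)"
  shows "((\<lambda>t. \<Prod>l<n. f l t) has_vector_derivative (\<Sum>j<n. \<Prod>l<n. if l = j then f' l else f l x)) (at x)"
  using assms
proof (induction n)
  case 0
  then show ?case by simp
next
  case (Suc n)
  have "((\<lambda>t. (\<Prod>l<n. f l t) * f n t) has_vector_derivative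
          ((\<Prod>l<n. f l x) * f' n + (\<Sum>j<n. \<Prod>l<n. if l = j then f' l else f l x) * f n x)) (at x)"
    using Suc by (intro has_vector_derivative_mult) auto
  moreover have "(\<Sum>j<Suc n. \<Prod>l<Suc n. if l = j then f' l else f l x)
      = (\<Prod>l<n. f l x) * f' n + (\<Sum>j<n. \<Prod>l<n. if l = j then f' l else f l x) * f n x"
  proof -
    have "(\<Prod>l<Suc n. if l = j then f' l else f l x) = (\<Prod>l<n. if l = j then f' l else f l x) * f n x"
      if "j < n" for j
      using that by (simp add: prod.lessThan_Suc)
    then show ?thesis
      by (simp add: prod.lessThan_Suc sum_distrib_right)
  qed
  ultimately show ?case
    by (simp add: add.commute)
qed

lemma has_vector_derivative_unique_on_open:
  fixes f :: "real \<Rightarrow> complex"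
  assumes "(f has_vector_derivative f') (at x)" and "(g has_vector_derivative g') (at x)"
    and "open I" and "x \<in> I" and "\<And>t. t \<in> I \<Longrightarrow> f t = g t"
  shows "f' = g'"
proof -
  have "(g has_vector_derivative f') (at x)"
    using assms by (intro has_vector_derivative_transform_within_open[OF assms(1)]) auto
  then show ?thesis
    using assms(2) by (rule vector_derivative_unique_at)
qed

locale unbiased_product_model =
  fixes d n :: nat and I :: "real set" and rho :: "nat \<Rightarrow> real \<Rightarrow> cmat" and Th :: tmat
  assumes open_domain: "open I"
    and density: "\<And>j \<theta>. j < n \<Longrightarrow> \<theta> \<in> I \<Longrightarrow> pd_density d (rho j \<theta>)"
    and differentiable: "\<And>j \<theta> a b. j < n \<Longrightarrow> \<theta> \<in> I \<Longrightarrow> a < d \<Longrightarrow> b < d \<Longrightarrow>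
                           (\<lambda>t. rho j t a b) differentiable (at \<theta>)"
    and estimator_hermitian: "thermitian d n Th"
    and unbiased: "\<And>\<theta>. \<theta> \<in> I \<Longrightarrow>
                     ttrace d n (tmult d n (tensor_prod n (\<lambda>j. rho j \<theta>)) Th) = complex_of_real \<theta>"
begin

definition state :: "real \<Rightarrow> tmat" where
  "state \<theta> = tensor_prod n (\<lambda>j. rho j \<theta>)"

definition local_score :: "nat \<Rightarrow> real \<Rightarrow> cmat" where
  "local_score j \<theta> = mult_on {..<d} (minv d (rho j \<theta>)) (mderiv (rho j) \<theta>)"

definition total_score :: "real \<Rightarrow> tmat" where
  "total_score \<theta> = (\<lambda>i k. \<Sum>j<n. embed_at n j (local_score j \<theta>) i k)"

definition deviation :: "real \<Rightarrow> tmat" where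
  "deviation \<theta> = (\<lambda>i k. Th i k - complex_of_real \<theta> * tid i k)"

lemma mposdef_rho: "j < n \<Longrightarrow> \<theta> \<in> I \<Longrightarrow> mposdef d (rho j \<theta>)"
  using density by (simp add: pd_density_def)

lemma trace_rho: "j < n \<Longrightarrow> \<theta> \<in> I \<Longrightarrow> trace_on {..<d} (rho j \<theta>) = 1"
  using density by (simp add: pd_density_def mtrace_eq_trace_on)

lemma rho_has_vector_derivative:
  "j < n \<Longrightarrow> \<theta> \<in> I \<Longrightarrow> a < d \<Longrightarrow> b < d \<Longrightarrow>
     ((\<lambda>t. rho j t a b) has_vector_derivative mderiv (rho j) \<theta> a b) (at \<theta>)"
  using differentiable by (simp add: mderiv_def vector_derivative_works[symmetric])

lemma mderiv_hermitian:
  assumes "j < n" and "\<theta> \<in> I"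
  shows "eq_on {..<d} (adj (mderiv (rho j) \<theta>)) (mderiv (rho j) \<theta>)"
proof (rule eq_onI)
  fix a b assume ab: "a \<in> {..<d}" "b \<in> {..<d}"
  have "((\<lambda>t. cnj (rho j t b a)) has_vector_derivative cnj (mderiv (rho j) \<theta> b a)) (at \<theta>)"
    using assms ab by (intro has_vector_derivative_cnj rho_has_vector_derivative) auto
  moreover have "((\<lambda>t. rho j t a b) has_vector_derivative mderiv (rho j) \<theta> a b) (at \<theta>)"
    using assms ab by (intro rho_has_vector_derivative) auto
  moreover have "cnj (rho j t b a) = rho j t a b" if "t \<in> I" for t
  proof -
    have "mhermitian d (rho j t)"
      using mposdef_rho[OF assms(1) that] unfolding mposdef_def by (rule conjunct1)
    then have "rho j t a b = cnj (rho j t b a)"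
      using ab unfolding mhermitian_def by blast
    then show ?thesis
      by simp
  qed
  ultimately show "adj (mderiv (rho j) \<theta>) a b = mderiv (rho j) \<theta> a b"
    unfolding adj_def by (rule has_vector_derivative_unique_on_open[OF _ _ open_domain assms(2)])
qed

lemma mderiv_traceless:
  assumes "j < n" and "\<theta> \<in> I"
  shows "trace_on {..<d} (mderiv (rho j) \<theta>) = 0"
proof -
  have "((\<lambda>t. trace_on {..<d} (rho j t)) has_vector_derivative trace_on {..<d} (mderiv (rho j) \<theta>)) (at \<theta>)"
    unfolding trace_on_def using assms by (intro has_vector_derivative_sum rho_has_vector_derivative) auto
  moreover have "((\<lambda>t. 1) has_vector_derivative 0) (at \<theta>)"
    by simp
  ultimately show ?thesis
    by (rule has_vector_derivative_unique_on_open[OF _ _ open_domain assms(2)]) (use assms(1) trace_rho in auto)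
qed

lemma factor_density_tangent:
  assumes "j < n" and "\<theta> \<in> I"
  shows "density_tangent d (rho j \<theta>) (minv d (rho j \<theta>)) (mderiv (rho j) \<theta>)"
proof (rule density_tangent.intro)
  show "gram_on {..<d} (rho j \<theta>)"
    by (rule mposdef_gram_on[OF mposdef_rho[OF assms]])
  show "eq_on {..<d} (mult_on {..<d} (rho j \<theta>) (minv d (rho j \<theta>))) mid"
    and "eq_on {..<d} (mult_on {..<d} (minv d (rho j \<theta>)) (rho j \<theta>)) mid"
    by (rule mposdef_minv[OF mposdef_rho[OF assms]])+
qed (rule mderiv_hermitian[OF assms] mderiv_traceless[OF assms])+

lemma local_score_eq:
  "j < n \<Longrightarrow> \<theta> \<in> I \<Longrightarrow> local_score j \<theta> = density_tangent.score d (minv d (rho j \<theta>)) (mderiv (rho j) \<theta>)"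
  by (simp add: local_score_def density_tangent.score_def[OF factor_density_tangent])

lemma Htil_eq:
  "j < n \<Longrightarrow> \<theta> \<in> I \<Longrightarrow> Htil d (rho j) \<theta> = density_tangent.sym_score d (minv d (rho j \<theta>)) (mderiv (rho j) \<theta>)"
  by (simp add: Htil_def density_tangent.sym_score_def[OF factor_density_tangent] mmult_eq_mult_on)

lemma Itil_eq:
  "Itil d (rho j) \<theta> = trace_on {..<d} (mult_on {..<d} (rho j \<theta>) (mult_on {..<d} (Htil d (rho j) \<theta>) (Htil d (rho j) \<theta>)))"
  by (simp add: Itil_def mtrace_eq_trace_on mmult_eq_mult_on)

lemma Itil_real: "j < n \<Longrightarrow> \<theta> \<in> I \<Longrightarrow> Itil d (rho j) \<theta> \<in> \<real>"
  unfolding Itil_eq Htil_eq by (rule density_tangent.trace_rho_sym_score_square_real[OF factor_density_tangent])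

lemma local_score_norm_le_Itil:
  "j < n \<Longrightarrow> \<theta> \<in> I \<Longrightarrow>
     Re (weighted_inner {..<d} (rho j \<theta>) (local_score j \<theta>) (local_score j \<theta>)) \<le> Re (Itil d (rho j) \<theta>)"
  unfolding Itil_eq Htil_eq local_score_eq
  by (rule density_tangent.score_norm_le_trace_rho_sym_score_square[OF factor_density_tangent])

lemma trace_rho_local_score: "j < n \<Longrightarrow> \<theta> \<in> I \<Longrightarrow> trace_on {..<d} (mult_on {..<d} (rho j \<theta>) (local_score j \<theta>)) = 0"
  unfolding local_score_eq by (rule density_tangent.trace_rho_score[OF factor_density_tangent])

lemma trace_rho_Htil: "j < n \<Longrightarrow> \<theta> \<in> I \<Longrightarrow> trace_on {..<d} (mult_on {..<d} (rho j \<theta>) (Htil d (rho j) \<theta>)) = 0"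
  unfolding Htil_eq by (rule density_tangent.trace_rho_sym_score[OF factor_density_tangent])

lemma rho_local_score: "j < n \<Longrightarrow> \<theta> \<in> I \<Longrightarrow> eq_on {..<d} (mult_on {..<d} (rho j \<theta>) (local_score j \<theta>)) (mderiv (rho j) \<theta>)"
  unfolding local_score_eq by (rule density_tangent.rho_score[OF factor_density_tangent])

lemma gram_on_state: "\<theta> \<in> I \<Longrightarrow> gram_on (MI d n) (state \<theta>)"
  unfolding state_def by (intro gram_on_tensor_prod mposdef_gram_on mposdef_rho)

lemma trace_state: "\<theta> \<in> I \<Longrightarrow> trace_on (MI d n) (state \<theta>) = 1"
  by (simp add: state_def trace_on_tensor_prod trace_rho)

lemma deviation_hermitian: "eq_on (MI d n) (adj (deviation \<theta>)) (deviation \<theta>)"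
proof (rule eq_onI)
  fix i k assume "i \<in> MI d n" "k \<in> MI d n"
  then have "Th i k = cnj (Th k i)"
    using estimator_hermitian unfolding thermitian_def by blast
  then show "adj (deviation \<theta>) i k = deviation \<theta> i k"
    by (simp add: adj_def deviation_def tid_def)
qed

lemma tvar_eq_weighted_inner:
  "tvar d n (state \<theta>) Th \<theta> = weighted_inner (MI d n) (state \<theta>) (deviation \<theta>) (deviation \<theta>)"
  unfolding tvar_def Let_def weighted_inner_def tmult_eq_mult_on ttrace_eq_trace_on deviation_def[symmetric]
  by (intro trace_on_cong mult_on_cong_right eq_on_sym[OF deviation_hermitian])

lemma trace_state_deviation:
  assumes "t \<in> I"
  shows "trace_on (MI d n) (mult_on (MI d n) (state t) (deviation \<theta>)) = of_real (t - \<theta>)"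
proof -
  have "trace_on (MI d n) (mult_on (MI d n) (state t) tid) = trace_on (MI d n) (state t)"
    unfolding tid_def by (intro trace_on_cong mult_on_id_right finite_MI)
  moreover have "trace_on (MI d n) (mult_on (MI d n) (state t) Th) = of_real t"
    using unbiased[OF assms] by (simp add: state_def ttrace_eq_trace_on tmult_eq_mult_on)
  ultimately show ?thesis
    unfolding deviation_def using trace_state[OF assms]
    by (simp only: mult_on_diff_right mult_on_scale_right trace_on_diff trace_on_scale) simp
qed

lemma state_has_vector_derivative:
  assumes "\<theta> \<in> I" and "i \<in> MI d n" and "k \<in> MI d n"
  shows "((\<lambda>t. state t i k) has_vector_derivative mult_on (MI d n) (state \<theta>) (total_score \<theta>) i k) (at \<theta>)"
proof -
  have "((\<lambda>t. state t i k) has_vector_derivative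
          (\<Sum>j<n. \<Prod>l<n. if l = j then mderiv (rho l) \<theta> (i l) (k l) else rho l \<theta> (i l) (k l))) (at \<theta>)"
    unfolding state_def tensor_prod_def using assms
    by (intro has_vector_derivative_prod_lessThan rho_has_vector_derivative) (auto simp: MI_less)
  moreover have "mult_on (MI d n) (state \<theta>) (total_score \<theta>) i k
      = (\<Sum>j<n. tensor_prod n (\<lambda>l. mult_on {..<d} (rho l \<theta>) (if l = j then local_score j \<theta> else mid)) i k)"
    unfolding total_score_def mult_on_sum_right state_def
    by (intro sum.cong refl) (simp add: embed_at_eq_tensor_prod mult_on_tensor_prod if_distrib)
  moreover have "mult_on {..<d} (rho l \<theta>) (if l = j then local_score j \<theta> else mid) (i l) (k l)
      = (if l = j then mderiv (rho l) \<theta> (i l) (k l) else rho l \<theta> (i l) (k l))" if "l < n" for j l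
    using rho_local_score[OF that assms(1)] mult_on_mid_right[of d "rho l \<theta>"] assms(2,3) that
    by (auto simp: eq_on_def MI_less)
  ultimately show ?thesis
    by (simp add: tensor_prod_def)
qed

lemma weighted_inner_total_score_deviation:
  assumes "\<theta> \<in> I"
  shows "weighted_inner (MI d n) (state \<theta>) (total_score \<theta>) (deviation \<theta>) = 1"
proof -
  let ?S = "MI d n"
  define f where "f t = (\<Sum>i\<in>?S. \<Sum>j\<in>?S. state t i j * deviation \<theta> j i)" for t
  have f_eq: "f t = of_real (t - \<theta>)" if "t \<in> I" for t
    using trace_state_deviation[OF that, of \<theta>] by (simp add: f_def trace_on_def mult_on_def)
  have "(f has_vector_derivative
          (\<Sum>i\<in>?S. \<Sum>j\<in>?S. mult_on ?S (state \<theta>) (total_score \<theta>) i j * deviation \<theta> j i)) (at \<theta>)"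
    unfolding f_def using assms
    by (intro has_vector_derivative_sum has_vector_derivative_mult_left state_has_vector_derivative) auto
  also have "(\<Sum>i\<in>?S. \<Sum>j\<in>?S. mult_on ?S (state \<theta>) (total_score \<theta>) i j * deviation \<theta> j i)
      = trace_on ?S (mult_on ?S (mult_on ?S (state \<theta>) (total_score \<theta>)) (deviation \<theta>))"
    by (simp add: trace_on_def mult_on_def[of ?S "mult_on ?S (state \<theta>) (total_score \<theta>)"])
  finally have "(f has_vector_derivative
          trace_on ?S (mult_on ?S (mult_on ?S (state \<theta>) (total_score \<theta>)) (deviation \<theta>))) (at \<theta>)" .
  moreover have "((\<lambda>t. of_real (t - \<theta>)) has_vector_derivative 1) (at \<theta>)"
    by (auto intro!: derivative_eq_intros)
  ultimately have "trace_on ?S (mult_on ?S (mult_on ?S (state \<theta>) (total_score \<theta>)) (deviation \<theta>)) = 1"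
    by (rule has_vector_derivative_unique_on_open[OF _ _ open_domain assms]) (rule f_eq)
  moreover have "weighted_inner ?S (state \<theta>) (total_score \<theta>) (deviation \<theta>)
      = trace_on ?S (mult_on ?S (mult_on ?S (state \<theta>) (total_score \<theta>)) (deviation \<theta>))"
    unfolding weighted_inner_def mult_on_assoc
    by (intro trace_on_cong mult_on_cong_right deviation_hermitian)
  ultimately show ?thesis
    by simp
qed

lemma weighted_inner_total_score:
  assumes "\<theta> \<in> I"
  shows "weighted_inner (MI d n) (state \<theta>) (total_score \<theta>) (total_score \<theta>)
           = (\<Sum>j<n. weighted_inner {..<d} (rho j \<theta>) (local_score j \<theta>) (local_score j \<theta>))"
proof -
  have "adj (total_score \<theta>) = (\<lambda>i k. \<Sum>j<n. embed_at n j (adj (local_score j \<theta>)) i k)"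
    unfolding total_score_def adj_sum by (intro ext sum.cong refl) (simp add: adj_embed_at)
  then show ?thesis
    unfolding weighted_inner_def state_def total_score_def
    by (simp only: trace_tensor_prod_embed_sums[OF trace_rho[OF _ assms] trace_rho_local_score[OF _ assms]])
qed

theorem variance_ge_inverse_fisher:
  assumes "\<theta> \<in> I"
  shows "1 / (\<Sum>j<n. Re (Itil d (rho j) \<theta>)) \<le> Re (tvar d n (state \<theta>) Th \<theta>)"
proof -
  let ?w = "weighted_inner (MI d n) (state \<theta>)"
  define W where "W = Re (?w (total_score \<theta>) (total_score \<theta>))"
  define V where "V = Re (?w (deviation \<theta>) (deviation \<theta>))"
  have "(cmod (?w (total_score \<theta>) (deviation \<theta>)))\<^sup>2 \<le> W * V"
    unfolding W_def V_def by (rule weighted_inner_cauchy_schwarz[OF gram_on_state[OF assms]]) simp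
  then have WV: "1 \<le> W * V"
    by (simp add: weighted_inner_total_score_deviation[OF assms])
  have "0 \<le> W"
    unfolding W_def by (rule weighted_inner_self_real(2)[OF gram_on_state[OF assms]])
  with WV have W_pos: "0 < W"
    by (cases "W = 0") auto
  have "W \<le> (\<Sum>j<n. Re (Itil d (rho j) \<theta>))"
    unfolding W_def weighted_inner_total_score[OF assms] Re_sum
    by (intro sum_mono local_score_norm_le_Itil assms) simp
  with W_pos have "1 / (\<Sum>j<n. Re (Itil d (rho j) \<theta>)) \<le> 1 / W"
    by (intro divide_left_mono) auto
  also have "\<dots> \<le> V"
    using WV W_pos by (simp add: divide_le_eq mult.commute)
  finally show ?thesis
    by (simp add: V_def tvar_eq_weighted_inner)
qed

lemma variance_ge_inverse_fisher_identical:
  assumes "\<theta> \<in> I" and identical: "\<forall>j<n. rho j = rho 0"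
  shows "1 / (real n * Re (Itil d (rho 0) \<theta>)) \<le> Re (tvar d n (state \<theta>) Th \<theta>)"
proof -
  have "(\<Sum>j<n. Re (Itil d (rho j) \<theta>)) = (\<Sum>j<n. Re (Itil d (rho 0) \<theta>))"
  proof (rule sum.cong)
    fix j assume "j \<in> {..<n}"
    then have "rho j = rho 0"
      using identical by blast
    then show "Re (Itil d (rho j) \<theta>) = Re (Itil d (rho 0) \<theta>)"
      by simp
  qed simp
  then show ?thesis
    using variance_ge_inverse_fisher[OF assms(1)] by simp
qed

lemma tvar_real: "\<theta> \<in> I \<Longrightarrow> tvar d n (state \<theta>) Th \<theta> \<in> \<real>"
  unfolding tvar_eq_weighted_inner
  by (subst weighted_inner_self_real(1)[OF gram_on_state]) auto

lemma sum_Itil_eq: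
  assumes "\<theta> \<in> I"
  shows "(\<Sum>j<n. Itil d (rho j) \<theta>) =
           (let Hb = (\<lambda>i k. \<Sum>j<n. embed_at n j (Htil d (rho j) \<theta>) i k)
            in ttrace d n (tmult d n (state \<theta>) (tmult d n Hb Hb)))"
  unfolding Let_def ttrace_eq_trace_on tmult_eq_mult_on state_def Itil_eq
  by (rule trace_tensor_prod_embed_sums[OF trace_rho[OF _ assms] trace_rho_Htil[OF _ assms], symmetric])

end

theorem mainTheorem9:
  fixes d n :: nat and I :: "real set"
    and rho :: "nat \<Rightarrow> real \<Rightarrow> cmat" and Th :: tmat
  assumes "d \<ge> 1" and "n \<ge> 1"
    and "open I" and "is_interval I" and "I \<noteq> {}"
    and dens: "\<And>j \<theta>. j < n \<Longrightarrow> \<theta> \<in> I \<Longrightarrow> pd_density d (rho j \<theta>)"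
    and diff: "\<And>j \<theta> a b. j < n \<Longrightarrow> \<theta> \<in> I \<Longrightarrow> a < d \<Longrightarrow> b < d \<Longrightarrow>
                 (\<lambda>t. rho j t a b) differentiable (at \<theta>)"
    and selfadj: "thermitian d n Th"
    and unbiased: "\<And>\<theta>. \<theta> \<in> I \<Longrightarrow>
                 ttrace d n (tmult d n (tensor_prod n (\<lambda>j. rho j \<theta>)) Th) = complex_of_real \<theta>"
  shows "\<forall>\<theta>\<in>I.
           tvar d n (tensor_prod n (\<lambda>j. rho j \<theta>)) Th \<theta> \<in> \<real>
         \<and> (\<forall>j<n. Itil d (rho j) \<theta> \<in> \<real>)
         \<and> Re (tvar d n (tensor_prod n (\<lambda>j. rho j \<theta>)) Th \<theta>)
             \<ge> 1 / (\<Sum>j<n. Re (Itil d (rho j) \<theta>))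
         \<and> (\<Sum>j<n. Itil d (rho j) \<theta>) =
             (let Hb = (\<lambda>i k. \<Sum>j<n. embed_at n j (Htil d (rho j) \<theta>) i k)
              in ttrace d n (tmult d n (tensor_prod n (\<lambda>j. rho j \<theta>)) (tmult d n Hb Hb)))
         \<and> (n = 1 \<longrightarrow> Re (tvar d n (tensor_prod n (\<lambda>j. rho j \<theta>)) Th \<theta>)
                        \<ge> 1 / Re (Itil d (rho 0) \<theta>))
         \<and> ((\<forall>j<n. rho j = rho 0) \<longrightarrow>
              Re (tvar d n (tensor_prod n (\<lambda>j. rho j \<theta>)) Th \<theta>)
                \<ge> 1 / (real n * Re (Itil d (rho 0) \<theta>)))"
proof -
  interpret unbiased_product_model d n I rho Th
    by (rule unbiased_product_model.intro) (fact assms(3) dens diff selfadj unbiased)+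
  show ?thesis
  proof (intro ballI conjI impI allI)
    fix \<theta> assume \<theta>: "\<theta> \<in> I"
    show "tvar d n (tensor_prod n (\<lambda>j. rho j \<theta>)) Th \<theta> \<in> \<real>"
      using tvar_real[OF \<theta>] by (simp only: state_def)
    show "Itil d (rho j) \<theta> \<in> \<real>" if "j < n" for j
      by (rule Itil_real[OF that \<theta>])
    show "1 / (\<Sum>j<n. Re (Itil d (rho j) \<theta>)) \<le> Re (tvar d n (tensor_prod n (\<lambda>j. rho j \<theta>)) Th \<theta>)"
      using variance_ge_inverse_fisher[OF \<theta>] by (simp only: state_def)
    show "(\<Sum>j<n. Itil d (rho j) \<theta>) =
             (let Hb = (\<lambda>i k. \<Sum>j<n. embed_at n j (Htil d (rho j) \<theta>) i k)
              in ttrace d n (tmult d n (tensor_prod n (\<lambda>j. rho j \<theta>)) (tmult d n Hb Hb)))"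
      using sum_Itil_eq[OF \<theta>] by (simp only: state_def)
    show "n = 1 \<Longrightarrow> 1 / Re (Itil d (rho 0) \<theta>) \<le> Re (tvar d n (tensor_prod n (\<lambda>j. rho j \<theta>)) Th \<theta>)"
      using variance_ge_inverse_fisher[OF \<theta>, unfolded state_def] by simp
    show "\<forall>j<n. rho j = rho 0 \<Longrightarrow>
            1 / (real n * Re (Itil d (rho 0) \<theta>)) \<le> Re (tvar d n (tensor_prod n (\<lambda>j. rho j \<theta>)) Th \<theta>)"
      using variance_ge_inverse_fisher_identical[OF \<theta>] by (simp only: state_def)
  qed
qed

end
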